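(* (1) If $\mathsf{A}_0,\dots,\mathsf{A}_{n-1}$ and $\mathsf{B}\neq\mathsf{0}$ are in $\mathbb{S}$ and $j<n$ is such that $\mathsf{A}_i\le\mathsf{A}_j$ for all $i<n$, then $\big(\sum_{i<n}\mathsf{A}_i\big)*\exp(\mathsf{B})\equiv\mathsf{A}_j*\exp(\mathsf{B})$. (2) If $\mathsf{A}\in\mathbb{S}$, then for every natural number $m$, $\exp(\mathsf{A})\cdot m\le\exp(\mathsf{A}+\mathsf{1})$.
   Context: Standard generating sets: $\mathrm{Homeo}_+(I)$ acts on $I=[0,1]$ on the right. Support $\mathrm{supt}(f)=\{t:tf\ne t\}$; extended support = interior of its closure; orbitals = components of the support, endpoints = transition points; a bump has exactly one orbital, positive if $tf>t$ there, else negative. A marking assigns to each bump $b$ with support $(u,v)$ a point $s_b\in(u,v)$; feet of $b$: $(u,s_b)$ and $[t_b,v)$ with $t_b=s_bb$ ($b$ positive) or $s_bb^{-1}$ ($b$ negative). A marked function has finitely many bumps, each marked. A finite set of marked functions is fast if no bump occurs in two of its elements and distinct bumps have disjoint feet. A standard function is a marked function whose extended support is an interval, with all positive bumps right of all negative bumps, and #positive $-$ #negative bumps $\in\{0,1\}$. For standard $f,g$: $f\ll g$ iff extended supports disjoint with $f$'s to the left; $f\sqsubset g$ iff closure of extended support of $f$ lies in extended support of $g$; $f<g$ iff $f\ll g$ or $f\sqsubset g$. $f^\circ$: if $f$ has $>2$ orbitals, $f$ restricted to the union of its non-extreme orbitals; if $f$ has 1 or 2 orbitals and the left foot of its positive bump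 is $(r,s)$, a positive bump with support $(r,s)$. $(f,g)$ is a standard pair if $\{f,g\}$ is fast and either $f\ll g$ or ($f\sqsubset g$ and $(g^\circ,f)$ is a standard pair). $\mathcal{S}$ = finite sets of standard functions, pairwise $<$-comparable, each pair $f<g$ a standard pair. Oscillation $o(f,g)$ for $f<g$: number of orbitals of $g$ containing a transition point of $f$. Signatures: the signature of $A\in\mathcal S$ is $(f,g)\mapsto o(f,g)$ on pairs $f<g$ of $A$; functions on pairs of finite linear orders are equivalent if an order-preserving bijection of bases carries one to the other; $\mathbb{S}$ is the set of signatures of members of $\mathcal S$ up to equivalence. $\mathsf{0},\mathsf{1}$: base sizes $0,1$. $\mathsf{A}+\mathsf{B}$: base $A$ followed by $B$, agreeing with $\mathsf{A},\mathsf{B}$ on their bases, value $0$ across; $\sum_{i<n}$ is iterated sum left to right and $\mathsf{A}\cdot m=\sum_{i<m}\mathsf{A}$. $\exp(\mathsf{A})$: same base, values $\mathsf{A}(i,j)+1$. $\mathsf{A}*\exp(\mathsf{B})$: base $A$ followed by $B$, agreeing with $\mathsf{A}$ on $A$, with $\exp(\mathsf{B})$ on $B$, value $1$ across (these operations stay in $\mathbb{S}$). Inflation: for $\mathsf{A}$ with base $A$ and $m\in A$, $\mathsf{A}^m$ has base $A\cup\{i^m:i\in A,\ i<m,\ \mathsf{A}(i,m)>0\}$ (new symbols), the new elements placed above all elements of $A$ below $m$ and below $m$, with $i^m<j^m$ iff $i<j$; it extends $\mathsf{A}$ by, for $i,j<m\le k$ (with $\mathsf{A}(m,m)=\infty$):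 $\mathsf{A}^m(i^m,j^m)=\mathsf{A}(i,j)$, $\mathsf{A}^m(i,j^m)=\min(\mathsf{A}(j,m)-1,\mathsf{A}(i,m))$, $\mathsf{A}^m(i^m,k)=\min(\mathsf{A}(i,m),\mathsf{A}(m,k))$. $\mathsf{A}\le\mathsf{B}$ iff there is a sequence $\mathsf{B}_0=\mathsf{B},\dots,\mathsf{B}_n=\mathsf{A}$ with each $\mathsf{B}_{i+1}$ (equivalent to) a restriction to a subset of the base of an inflation of $\mathsf{B}_i$; $\mathsf{A}\equiv\mathsf{B}$ iff $\mathsf{A}\le\mathsf{B}\le\mathsf{A}$. *)

theory Defs
  imports "HOL-Analysis.Analysis"
begin

text \<open>Right action t f is written as function application f t.\<close>

definition homeo_plus :: "(real \<Rightarrow> real) \<Rightarrow> bool" where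
  "homeo_plus f \<longleftrightarrow> (\<exists>g. homeomorphism {0..1} {0..1} f g) \<and> strict_mono_on {0..1} f"

definition supt :: "(real \<Rightarrow> real) \<Rightarrow> real set" where
  "supt f = {t \<in> {0..1}. f t \<noteq> t}"

definition ext_supt :: "(real \<Rightarrow> real) \<Rightarrow> real set" where
  "ext_supt f = interior (closure (supt f))"

definition orbitals :: "(real \<Rightarrow> real) \<Rightarrow> real set set" where
  "orbitals f = {connected_component_set (supt f) x | x. x \<in> supt f}"

definition trans_pts :: "(real \<Rightarrow> real) \<Rightarrow> real set" where
  "trans_pts f = (\<Union>U\<in>orbitals f. {Inf U, Sup U})"

definition bump_of :: "(real \<Rightarrow> real) \<Rightarrow> real set \<Rightarrow> (real \<Rightarrow> real)" where
  "bump_of f U = (\<lambda>t. if t \<in> U then f t else t)"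

definition positive_orb :: "(real \<Rightarrow> real) \<Rightarrow> real set \<Rightarrow> bool" where
  "positive_orb f U \<longleftrightarrow> (\<forall>t\<in>U. t < f t)"

text \<open>A marked function: the homeomorphism together with a marking assigning to each orbital
  (i.e. to each bump) a point of it.\<close>
type_synonym mfun = "(real \<Rightarrow> real) \<times> (real set \<Rightarrow> real)"

definition marked :: "mfun \<Rightarrow> bool" where
  "marked p \<longleftrightarrow> homeo_plus (fst p) \<and> finite (orbitals (fst p))
     \<and> (\<forall>U\<in>orbitals (fst p). snd p U \<in> U)"

definition tpt :: "mfun \<Rightarrow> real set \<Rightarrow> real" where
  "tpt p U = (if positive_orb (fst p) U then fst p (snd p U)
              else inv_into {0..1} (fst p) (snd p U))"

definition lfoot :: "mfun \<Rightarrow> real set \<Rightarrow> real set" where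
  "lfoot p U = {Inf U<..<snd p U}"

definition rfoot :: "mfun \<Rightarrow> real set \<Rightarrow> real set" where
  "rfoot p U = {tpt p U..<Sup U}"

definition fast :: "mfun set \<Rightarrow> bool" where
  "fast F \<longleftrightarrow> finite F \<and> (\<forall>p\<in>F. marked p)
     \<and> (\<forall>p\<in>F. \<forall>q\<in>F. p \<noteq> q \<longrightarrow>
          (\<forall>U\<in>orbitals (fst p). \<forall>V\<in>orbitals (fst q). bump_of (fst p) U \<noteq> bump_of (fst q) V))
     \<and> (\<forall>p\<in>F. \<forall>q\<in>F. \<forall>U\<in>orbitals (fst p). \<forall>V\<in>orbitals (fst q).
          bump_of (fst p) U \<noteq> bump_of (fst q) V \<longrightarrow>
          (lfoot p U \<union> rfoot p U) \<inter> (lfoot q V \<union> rfoot q V) = {})"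

definition standard :: "mfun \<Rightarrow> bool" where
  "standard p \<longleftrightarrow> marked p
     \<and> connected (ext_supt (fst p)) \<and> ext_supt (fst p) \<noteq> {}
     \<and> (\<forall>U\<in>orbitals (fst p). \<forall>P\<in>orbitals (fst p).
          \<not> positive_orb (fst p) U \<and> positive_orb (fst p) P \<longrightarrow> Sup U \<le> Inf P)
     \<and> (let pos = card {U\<in>orbitals (fst p). positive_orb (fst p) U};
            neg = card {U\<in>orbitals (fst p). \<not> positive_orb (fst p) U}
        in pos = neg \<or> pos = Suc neg)"

definition ll :: "mfun \<Rightarrow> mfun \<Rightarrow> bool" where
  "ll p q \<longleftrightarrow> ext_supt (fst p) \<inter> ext_supt (fst q) = {}
     \<and> (\<forall>x\<in>ext_supt (fst p). \<forall>y\<in>ext_supt (fst q). x < y)"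

definition sqsub :: "mfun \<Rightarrow> mfun \<Rightarrow> bool" where
  "sqsub p q \<longleftrightarrow> closure (ext_supt (fst p)) \<subseteq> ext_supt (fst q)"

definition slt :: "mfun \<Rightarrow> mfun \<Rightarrow> bool" where
  "slt p q \<longleftrightarrow> ll p q \<or> sqsub p q"

definition nonextreme_orbs :: "(real \<Rightarrow> real) \<Rightarrow> real set set" where
  "nonextreme_orbs f = {U\<in>orbitals f. (\<exists>V\<in>orbitals f. Sup V \<le> Inf U)
                                    \<and> (\<exists>V\<in>orbitals f. Sup U \<le> Inf V)}"

definition circ :: "mfun \<Rightarrow> mfun \<Rightarrow> bool" where
  "circ p h \<longleftrightarrow>
     (card (orbitals (fst p)) > 2 \<and>
        h = ((\<lambda>t. if t \<in> \<Union>(nonextreme_orbs (fst p)) then fst p t else t), snd p))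
   \<or> ((card (orbitals (fst p)) = 1 \<or> card (orbitals (fst p)) = 2) \<and>
        (\<exists>P\<in>orbitals (fst p). positive_orb (fst p) P \<and>
           marked h \<and> orbitals (fst h) = {lfoot p P} \<and> positive_orb (fst h) (lfoot p P)))"

inductive std_pair :: "mfun \<Rightarrow> mfun \<Rightarrow> bool" where
  sp_ll: "fast {p, q} \<Longrightarrow> ll p q \<Longrightarrow> std_pair p q"
| sp_sq: "fast {p, q} \<Longrightarrow> sqsub p q \<Longrightarrow> circ q h \<Longrightarrow> std_pair h p \<Longrightarrow> std_pair p q"

definition Sfam :: "mfun set set" where
  "Sfam = {A. finite A \<and> (\<forall>p\<in>A. standard p)
      \<and> (\<forall>p\<in>A. \<forall>q\<in>A. p \<noteq> q \<longrightarrow> slt p q \<or> slt q p)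
      \<and> (\<forall>p\<in>A. \<forall>q\<in>A. slt p q \<longrightarrow> std_pair p q)}"

definition osc :: "mfun \<Rightarrow> mfun \<Rightarrow> nat" where
  "osc p q = card {U\<in>orbitals (fst q). \<exists>t\<in>trans_pts (fst p). t \<in> U}"

text \<open>A signature is represented canonically: base {0..<n} with its natural order, values
  on pairs i<j<n, normalized to 0 elsewhere (so equivalence of signatures is equality).\<close>
type_synonym sig = "nat \<times> (nat \<Rightarrow> nat \<Rightarrow> nat)"

definition sig_norm :: "sig \<Rightarrow> sig" where
  "sig_norm A = (fst A, \<lambda>i j. if i < j \<and> j < fst A then snd A i j else 0)"

definition SigSet :: "sig set" where
  "SigSet = {sig_norm (card A, \<lambda>i j. osc (e i) (e j)) | A e.
       A \<in> Sfam \<and> bij_betw e {..<card A} A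
       \<and> (\<forall>i j. i < j \<and> j < card A \<longrightarrow> slt (e i) (e j))}"

definition sig_zero :: sig where "sig_zero = (0, \<lambda>_ _. 0)"
definition sig_one :: sig where "sig_one = (1, \<lambda>_ _. 0)"

definition sig_plus :: "sig \<Rightarrow> sig \<Rightarrow> sig" where
  "sig_plus A B = sig_norm (fst A + fst B, \<lambda>i j.
      if j < fst A then snd A i j
      else if fst A \<le> i then snd B (i - fst A) (j - fst A) else 0)"

definition sig_sum :: "(nat \<Rightarrow> sig) \<Rightarrow> nat \<Rightarrow> sig" where
  "sig_sum A n = foldl sig_plus sig_zero (map A [0..<n])"

definition sig_times :: "sig \<Rightarrow> nat \<Rightarrow> sig" where
  "sig_times A m = sig_sum (\<lambda>_. A) m"

definition sig_exp :: "sig \<Rightarrow> sig" where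
  "sig_exp A = sig_norm (fst A, \<lambda>i j. snd A i j + 1)"

definition sig_star_exp :: "sig \<Rightarrow> sig \<Rightarrow> sig" where
  "sig_star_exp A B = sig_norm (fst A + fst B, \<lambda>i j.
      if j < fst A then snd A i j
      else if fst A \<le> i then snd B (i - fst A) (j - fst A) + 1 else 1)"

definition infl_new :: "sig \<Rightarrow> nat \<Rightarrow> nat list" where
  "infl_new A m = filter (\<lambda>i. 0 < snd A i m) [0..<m]"

text \<open>Position p of the inflated base: Inl i = old element i, Inr i = new element i^m.\<close>
definition infl_elt :: "sig \<Rightarrow> nat \<Rightarrow> nat \<Rightarrow> nat + nat" where
  "infl_elt A m p = (let r = length (infl_new A m) in
      if p < m then Inl p else if p < m + r then Inr (infl_new A m ! (p - m))
      else Inl (p - r))"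

fun infl_val :: "sig \<Rightarrow> nat \<Rightarrow> nat + nat \<Rightarrow> nat + nat \<Rightarrow> nat" where
  "infl_val A m (Inl i) (Inl j) = snd A i j"
| "infl_val A m (Inr i) (Inr j) = snd A i j"
| "infl_val A m (Inl i) (Inr j) = min (snd A j m - 1) (snd A i m)"
| "infl_val A m (Inr i) (Inl k) = (if k = m then snd A i m else min (snd A i m) (snd A m k))"

definition inflate :: "sig \<Rightarrow> nat \<Rightarrow> sig" where
  "inflate A m = sig_norm (fst A + length (infl_new A m),
      \<lambda>p q. infl_val A m (infl_elt A m p) (infl_elt A m q))"

definition restr :: "sig \<Rightarrow> nat \<Rightarrow> (nat \<Rightarrow> nat) \<Rightarrow> sig" where
  "restr A k g = sig_norm (k, \<lambda>i j. snd A (g i) (g j))"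

definition sig_step :: "sig \<Rightarrow> sig \<Rightarrow> bool" where
  "sig_step B A \<longleftrightarrow> (\<exists>m < fst B. \<exists>k g. strict_mono_on {..<k} g
      \<and> g ` {..<k} \<subseteq> {..<fst (inflate B m)} \<and> A = restr (inflate B m) k g)"

definition sig_le :: "sig \<Rightarrow> sig \<Rightarrow> bool" where
  "sig_le A B \<longleftrightarrow> sig_step\<^sup>*\<^sup>* B A"

definition sig_equiv :: "sig \<Rightarrow> sig \<Rightarrow> bool" where
  "sig_equiv A B \<longleftrightarrow> sig_le A B \<and> sig_le B A"

end

(* An inflation step performed inside one block of a signature lifts to the whole signature
   when the block is followed by values 0 or 1 and preceded by values 0: an element i with
   A(i,m) > 0 has A(i,m) >= 1, so its copy i^m keeps the old values across the block.  The key step is that (Z + C) * exp(B) inflated at the first element m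
   of B contains (Z + C + C) * exp(B): every earlier element has value 1 with m, so all of them are
   copied, and the copies of C have value 0 to C and value 1 to B, just like a second copy of C.

   Part (1): replacing every A_i by A_j gives (sum A_i) * exp(B) <= (A_j * n) * exp(B), which
   collapses to A_j * exp(B); conversely A_j * exp(B) is a restriction of (sum A_i) * exp(B).
   Part (2): exp(A) * m <= (exp(A) * m) * exp(1) <= exp(A) * exp(1) = exp(A + 1). *)

theory Submission
  imports Defs
begin

lemma fst_sig_norm [simp]: "fst (sig_norm A) = fst A"
  by (simp add: sig_norm_def)

lemma snd_sig_norm: "snd (sig_norm A) i j = (if i < j \<and> j < fst A then snd A i j else 0)"
  by (simp add: sig_norm_def)

lemma sig_norm_eqI:
  assumes "n = n'" "\<And>i j. i < j \<Longrightarrow> j < n \<Longrightarrow> f i j = g i j"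
  shows "sig_norm (n, f) = sig_norm (n', g)"
  using assms by (auto simp: sig_norm_def fun_eq_iff)

lemma sig_norm_idem [simp]: "sig_norm (sig_norm A) = sig_norm A"
  by (auto simp: sig_norm_def fun_eq_iff)

lemma sig_norm_empty: "fst A = 0 \<Longrightarrow> sig_norm A = sig_zero"
  by (simp add: sig_norm_def sig_zero_def)

subsection \<open>Inflation steps as embeddings\<close>

text \<open>The base of an inflation of T at m, labelled: Inl p is the old element p and Inr i the new
  copy i^m.\<close>

fun infl_point :: "sig \<Rightarrow> nat \<Rightarrow> nat + nat \<Rightarrow> bool" where
  "infl_point T m (Inl p) \<longleftrightarrow> p < fst T"
| "infl_point T m (Inr i) \<longleftrightarrow> i < m \<and> 0 < snd T i m"

fun infl_less :: "nat \<Rightarrow> nat + nat \<Rightarrow> nat + nat \<Rightarrow> bool" where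
  "infl_less m (Inl p) (Inl q) \<longleftrightarrow> p < q"
| "infl_less m (Inr i) (Inr j) \<longleftrightarrow> i < j"
| "infl_less m (Inl p) (Inr j) \<longleftrightarrow> p < m"
| "infl_less m (Inr i) (Inl q) \<longleftrightarrow> m \<le> q"

definition infl_embedding :: "sig \<Rightarrow> nat \<Rightarrow> nat \<Rightarrow> (nat \<Rightarrow> nat + nat) \<Rightarrow> bool" where
  "infl_embedding T m k e \<longleftrightarrow> (\<forall>a<k. infl_point T m (e a))
     \<and> (\<forall>a b. a < b \<longrightarrow> b < k \<longrightarrow> infl_less m (e a) (e b))"

definition infl_pos :: "sig \<Rightarrow> nat \<Rightarrow> nat + nat \<Rightarrow> nat" where
  "infl_pos T m x = (case x of
      Inl p \<Rightarrow> if p < m then p else p + length (infl_new T m)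
    | Inr i \<Rightarrow> m + length (filter (\<lambda>i'. 0 < snd T i' m) [0..<i]))"

lemma length_filter_upt_less:
  assumes "i < j" "P i"
  shows "length (filter P [0..<i]) < length (filter P [0..<j])"
  using assms by (induction j) (auto simp: less_Suc_eq)

lemma nth_filter_upt_length:
  assumes "i < m" "P i"
  shows "filter P [0..<m] ! length (filter P [0..<i]) = i"
proof -
  have "[0..<m] = [0..<i] @ i # [Suc i..<m]"
    using assms upt_add_eq_append[of 0 i "m - i"] upt_conv_Cons by simp
  then show ?thesis using assms by (simp add: nth_append)
qed

lemma fst_inflate: "fst (inflate T m) = fst T + length (infl_new T m)"
  by (simp add: inflate_def)

lemma snd_inflate:
  "p < q \<Longrightarrow> q < fst (inflate T m) \<Longrightarrow>
     snd (inflate T m) p q = infl_val T m (infl_elt T m p) (infl_elt T m q)"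
  by (simp add: inflate_def snd_sig_norm)

lemma length_filter_less_infl_new:
  assumes "infl_point T m (Inr i)"
  shows "length (filter (\<lambda>i'. 0 < snd T i' m) [0..<i]) < length (infl_new T m)"
  using assms length_filter_upt_less[of i m] by (simp add: infl_new_def)

lemma infl_elt_pos:
  assumes "infl_point T m x"
  shows "infl_elt T m (infl_pos T m x) = x"
proof (cases x)
  case (Inr i)
  with assms nth_filter_upt_length[of i m] length_filter_less_infl_new[of T m i] show ?thesis
    by (auto simp: infl_pos_def infl_elt_def infl_new_def Let_def)
qed (auto simp: infl_pos_def infl_elt_def Let_def)

lemma infl_pos_less_fst:
  assumes "m < fst T" "infl_point T m x"
  shows "infl_pos T m x < fst (inflate T m)"
proof (cases x)
  case (Inr i)
  then show ?thesis using assms length_filter_less_infl_new[of T m i] by (simp add: infl_pos_def fst_inflate)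
qed (use assms in \<open>auto simp: infl_pos_def fst_inflate\<close>)

lemma infl_pos_strict_mono:
  assumes "infl_point T m x" "infl_point T m y" "infl_less m x y"
  shows "infl_pos T m x < infl_pos T m y"
proof (cases x)
  case (Inr i)
  then have "m + length (filter (\<lambda>i'. 0 < snd T i' m) [0..<i]) < m + length (infl_new T m)"
    using assms length_filter_less_infl_new[of T m i] by simp
  then show ?thesis using assms Inr length_filter_upt_less[of i _ "\<lambda>i'. 0 < snd T i' m"]
    by (cases y) (auto simp: infl_pos_def)
qed (use assms in \<open>cases y; auto simp: infl_pos_def\<close>)

lemma infl_elt_point:
  assumes "m < fst T" "p < fst (inflate T m)"
  shows "infl_point T m (infl_elt T m p)"
proof -
  have "infl_new T m ! (p - m) \<in> set (infl_new T m)" if "p - m < length (infl_new T m)"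
    using that by simp
  then show ?thesis using assms
    by (auto simp: infl_elt_def Let_def fst_inflate infl_new_def)
qed

lemma infl_elt_less:
  assumes "p < q" "q < fst (inflate T m)"
  shows "infl_less m (infl_elt T m p) (infl_elt T m q)"
proof -
  have "sorted_wrt (<) (infl_new T m)"
    by (simp add: infl_new_def sorted_wrt_filter)
  then have "infl_new T m ! (p - m) < infl_new T m ! (q - m)"
    if "m \<le> p" "q < m + length (infl_new T m)"
    using that assms sorted_wrt_nth_less[of "(<)" "infl_new T m" "p - m" "q - m"] by simp
  then show ?thesis using assms
    by (auto simp: infl_elt_def Let_def fst_inflate)
qed

lemma sig_step_embeddingE:
  assumes "sig_step T A"
  obtains m k e where "m < fst T" "infl_embedding T m k e"
    "A = sig_norm (k, \<lambda>a b. infl_val T m (e a) (e b))"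
proof -
  obtain m k g where m: "m < fst T" and g: "strict_mono_on {..<k} g"
    "g ` {..<k} \<subseteq> {..<fst (inflate T m)}" and A: "A = restr (inflate T m) k g"
    using assms unfolding sig_step_def by blast
  define e where "e a = infl_elt T m (g a)" for a
  have "infl_embedding T m k e"
    unfolding infl_embedding_def e_def
  proof (intro conjI allI impI)
    fix a assume "a < k"
    then show "infl_point T m (infl_elt T m (g a))"
      using g m infl_elt_point by blast
  next
    fix a b assume "a < b" "b < k"
    then show "infl_less m (infl_elt T m (g a)) (infl_elt T m (g b))"
      by (intro infl_elt_less) (use g in \<open>auto simp: strict_mono_on_def\<close>)
  qed
  moreover have "A = sig_norm (k, \<lambda>a b. infl_val T m (e a) (e b))"
    unfolding A restr_def
    by (rule sig_norm_eqI) (use g in \<open>auto simp: e_def snd_inflate strict_mono_on_def\<close>)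
  ultimately show ?thesis
    using m that by blast
qed

lemma sig_stepI:
  assumes e: "infl_embedding T m k e" and A: "A = sig_norm (k, \<lambda>a b. infl_val T m (e a) (e b))"
    and m: "m < fst T"
  shows "sig_step T A"
proof -
  define g where "g a = infl_pos T m (e a)" for a
  have g: "strict_mono_on {..<k} g" "g ` {..<k} \<subseteq> {..<fst (inflate T m)}"
    using e infl_pos_strict_mono[of T m] infl_pos_less_fst[OF m]
    by (auto simp: infl_embedding_def strict_mono_on_def g_def)
  moreover have "A = restr (inflate T m) k g"
    unfolding A restr_def
  proof (rule sig_norm_eqI)
    fix a b assume ab: "a < b" "b < k"
    then have "g a < g b" "g b < fst (inflate T m)"
      using g by (auto simp: strict_mono_on_def)
    then show "infl_val T m (e a) (e b) = snd (inflate T m) (g a) (g b)"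
      using e ab by (simp add: snd_inflate g_def infl_elt_pos infl_embedding_def)
  qed simp
  ultimately show "sig_step T A"
    using m unfolding sig_step_def by blast
qed

subsection \<open>Gluing signatures\<close>

definition sig_glue :: "nat \<Rightarrow> sig \<Rightarrow> sig \<Rightarrow> sig" where
  "sig_glue c A B = sig_norm (fst A + fst B, \<lambda>i j.
      if j < fst A then snd A i j else if fst A \<le> i then snd B (i - fst A) (j - fst A) else c)"

lemma sig_plus_eq_glue: "sig_plus A B = sig_glue 0 A B"
  by (simp add: sig_plus_def sig_glue_def)

lemma sig_star_exp_eq_glue: "sig_star_exp A B = sig_glue 1 A (sig_exp B)"
  unfolding sig_star_exp_def sig_glue_def sig_exp_def
  by (rule sig_norm_eqI) (auto simp: snd_sig_norm)

lemma fst_sig_exp [simp]: "fst (sig_exp B) = fst B"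
  by (simp add: sig_exp_def)

lemma fst_sig_glue [simp]: "fst (sig_glue c A B) = fst A + fst B"
  by (simp add: sig_glue_def)

lemma snd_sig_glue: "snd (sig_glue c A B) i j = (if i < j \<and> j < fst A + fst B then
    (if j < fst A then snd A i j else if fst A \<le> i then snd B (i - fst A) (j - fst A) else c)
    else 0)"
  by (simp add: sig_glue_def snd_sig_norm)

definition sig_block :: "sig \<Rightarrow> nat \<Rightarrow> sig \<Rightarrow> bool" where
  "sig_block T s X \<longleftrightarrow> fst X + s \<le> fst T
     \<and> (\<forall>i j. i < j \<longrightarrow> j < fst X \<longrightarrow> snd T (i + s) (j + s) = snd X i j)"

lemma sig_block_glue_fst: "sig_block (sig_glue c X Y) 0 X"
  by (simp add: sig_block_def snd_sig_glue)

lemma sig_block_glue_snd: "sig_block (sig_glue c X Y) (fst X) Y"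
  by (simp add: sig_block_def snd_sig_glue)

definition infl_shift :: "nat \<Rightarrow> nat + nat \<Rightarrow> nat + nat" where
  "infl_shift s = map_sum (\<lambda>i. i + s) (\<lambda>i. i + s)"

lemma infl_shift_0 [simp]: "infl_shift 0 x = x"
  by (cases x) (simp_all add: infl_shift_def)

lemma infl_less_shift [simp]:
  "infl_less (m + s) (infl_shift s x) (infl_shift s y) = infl_less m x y"
  by (cases x; cases y) (auto simp: infl_shift_def)

lemma infl_point_shift:
  assumes "sig_block T s X" "m < fst X" "infl_point X m x"
  shows "infl_point T (m + s) (infl_shift s x)"
  using assms by (cases x) (auto simp: infl_shift_def sig_block_def)

lemma infl_val_shift:
  assumes T: "sig_block T s X" and m: "m < fst X"
    and xy: "infl_point X m x" "infl_point X m y" "infl_less m x y"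
  shows "infl_val T (m + s) (infl_shift s x) (infl_shift s y) = infl_val X m x y"
proof -
  have "snd T (i + s) (j + s) = snd X i j" if "i < j" "j < fst X" for i j
    using T that by (simp add: sig_block_def)
  with m xy show ?thesis
    by (cases x; cases y) (auto simp: infl_shift_def)
qed

subsection \<open>Inflation steps in context\<close>

definition infl_append :: "nat \<Rightarrow> nat \<Rightarrow> (nat \<Rightarrow> nat + nat) \<Rightarrow> nat \<Rightarrow> nat + nat" where
  "infl_append k s e a = (if a < k then e a else Inl (s + (a - k)))"

definition infl_prepend :: "nat \<Rightarrow> (nat \<Rightarrow> nat + nat) \<Rightarrow> nat \<Rightarrow> nat + nat" where
  "infl_prepend s e a = (if a < s then Inl a else infl_shift s (e (a - s)))"

lemma infl_embedding_append:
  assumes m: "m < fst X" and e: "infl_embedding X m k e"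
  shows "infl_embedding (sig_glue c X Y) m (k + fst Y) (infl_append k (fst X) e)"
proof -
  have pt: "infl_point X m (e a)" if "a < k" for a
    using e that by (simp add: infl_embedding_def)
  have less: "infl_less m (e a) (e b)" if "a < b" "b < k" for a b
    using e that by (simp add: infl_embedding_def)
  have point_T: "infl_point (sig_glue c X Y) m (e a)" if "a < k" for a
    using infl_point_shift[OF sig_block_glue_fst m pt[OF that]] by simp
  show ?thesis
    unfolding infl_embedding_def
  proof safe
    fix a b assume "a < b" "b < k + fst Y"
    then show "infl_less m (infl_append k (fst X) e a) (infl_append k (fst X) e b)"
      using less pt m by (cases "e a") (fastforce simp: infl_append_def)+
  qed (use point_T in \<open>auto simp: infl_append_def\<close>)
qed

text \<open>c \<le> 1 is needed because a copy i^m gets the value min(X(i,m), c) to the elements of Y,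
  and this is c only because X(i,m) \<ge> 1.\<close>

lemma sig_glue_infl_val_append:
  assumes m: "m < fst X" and e: "infl_embedding X m k e" and c: "c \<le> 1"
    and X': "X' = sig_norm (k, \<lambda>a b. infl_val X m (e a) (e b))"
  shows "sig_glue c X' Y = sig_norm (k + fst Y, \<lambda>a b.
    infl_val (sig_glue c X Y) m (infl_append k (fst X) e a) (infl_append k (fst X) e b))"
  unfolding sig_glue_def[of c X' Y]
proof (rule sig_norm_eqI)
  let ?T = "sig_glue c X Y" and ?e = "infl_append k (fst X) e"
  fix a b assume ab: "a < b" "b < fst X' + fst Y"
  have pt: "infl_point X m (e a)" if "a < k" for a
    using e that by (simp add: infl_embedding_def)
  have less: "infl_less m (e a) (e b)" if "a < b" "b < k" for a b
    using e that by (simp add: infl_embedding_def)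
  consider "b < k" | "k \<le> a" | "a < k" "k \<le> b"
    by linarith
  then show "(if b < fst X' then snd X' a b
        else if fst X' \<le> a then snd Y (a - fst X') (b - fst X') else c)
      = infl_val ?T m (?e a) (?e b)"
  proof cases
    case 1
    then show ?thesis
      using ab infl_val_shift[OF sig_block_glue_fst m pt pt less]
      by (simp add: X' snd_sig_norm infl_append_def)
  next
    case 2
    then show ?thesis using ab by (auto simp: X' infl_append_def snd_sig_glue)
  next
    case 3
    then show ?thesis using ab pt[of a] m c
      by (cases "e a") (auto simp: X' infl_append_def snd_sig_glue)
  qed
qed (simp add: X')

lemma sig_step_glue_left:
  assumes step: "sig_step X X'" and c: "c \<le> 1"
  shows "sig_step (sig_glue c X Y) (sig_glue c X' Y)"
proof -
  obtain m k e where m: "m < fst X" and e: "infl_embedding X m k e"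
    and X': "X' = sig_norm (k, \<lambda>a b. infl_val X m (e a) (e b))"
    using step by (rule sig_step_embeddingE)
  show ?thesis
    using sig_stepI[OF infl_embedding_append[OF m e] sig_glue_infl_val_append[OF m e c X']] m
    by simp
qed

lemma infl_embedding_prepend:
  assumes m: "m < fst Y" and e: "infl_embedding Y m k e"
  shows "infl_embedding (sig_glue c X Y) (m + fst X) (fst X + k) (infl_prepend (fst X) e)"
proof -
  let ?x = "fst X"
  have pt: "infl_point Y m (e a)" if "a < k" for a
    using e that by (simp add: infl_embedding_def)
  have less: "infl_less m (e a) (e b)" if "a < b" "b < k" for a b
    using e that by (simp add: infl_embedding_def)
  show ?thesis
    unfolding infl_embedding_def
  proof safe
    fix a b assume "a < b" "b < ?x + k"
    show "infl_less (m + ?x) (infl_prepend ?x e a) (infl_prepend ?x e b)"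
    proof (cases "a < ?x")
      case True
      then show ?thesis using \<open>a < b\<close>
        by (cases "e (b - ?x)") (auto simp: infl_prepend_def infl_shift_def)
    next
      case False
      then show ?thesis using less[of "a - ?x" "b - ?x"] \<open>a < b\<close> \<open>b < ?x + k\<close>
        by (simp add: infl_prepend_def)
    qed
  qed (use infl_point_shift[OF sig_block_glue_snd m pt] in \<open>auto simp: infl_prepend_def\<close>)
qed

lemma sig_plus_infl_val_prepend:
  assumes m: "m < fst Y" and e: "infl_embedding Y m k e"
    and Y': "Y' = sig_norm (k, \<lambda>a b. infl_val Y m (e a) (e b))"
  shows "sig_plus X Y' = sig_norm (fst X + k, \<lambda>a b. infl_val (sig_glue 0 X Y) (m + fst X)
    (infl_prepend (fst X) e a) (infl_prepend (fst X) e b))"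
  unfolding sig_plus_eq_glue sig_glue_def[of 0 X Y']
proof (rule sig_norm_eqI)
  let ?T = "sig_glue 0 X Y" and ?x = "fst X" and ?e = "infl_prepend (fst X) e"
  fix a b assume ab: "a < b" "b < ?x + fst Y'"
  have pt: "infl_point Y m (e a)" if "a < k" for a
    using e that by (simp add: infl_embedding_def)
  have less: "infl_less m (e a) (e b)" if "a < b" "b < k" for a b
    using e that by (simp add: infl_embedding_def)
  consider "b < ?x" | "?x \<le> a" | "a < ?x" "?x \<le> b"
    by linarith
  then show "(if b < ?x then snd X a b
        else if ?x \<le> a then snd Y' (a - ?x) (b - ?x) else 0)
      = infl_val ?T (m + ?x) (?e a) (?e b)"
  proof cases
    case 1
    then show ?thesis using ab by (simp add: infl_prepend_def snd_sig_glue)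
  next
    case 2
    have "infl_val ?T (m + ?x) (infl_shift ?x (e (a - ?x))) (infl_shift ?x (e (b - ?x)))
        = infl_val Y m (e (a - ?x)) (e (b - ?x))"
      by (rule infl_val_shift[OF sig_block_glue_snd m]) (use ab 2 pt less in \<open>auto simp: Y'\<close>)
    moreover have "a - ?x < b - ?x" "b - ?x < k" "\<not> a < ?x" "\<not> b < ?x"
      using ab 2 by (auto simp: Y')
    ultimately show ?thesis using 2 by (simp add: Y' snd_sig_norm infl_prepend_def)
  next
    case 3
    then show ?thesis using ab pt[of "b - ?x"]
      by (cases "e (b - ?x)") (auto simp: Y' infl_prepend_def snd_sig_glue infl_shift_def)
  qed
qed (simp add: Y')

lemma sig_step_plus_right:
  assumes step: "sig_step Y Y'"
  shows "sig_step (sig_plus X Y) (sig_plus X Y')"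
proof -
  obtain m k e where m: "m < fst Y" and e: "infl_embedding Y m k e"
    and Y': "Y' = sig_norm (k, \<lambda>a b. infl_val Y m (e a) (e b))"
    using step by (rule sig_step_embeddingE)
  show ?thesis
    using sig_stepI[OF infl_embedding_prepend[OF m e, of 0] sig_plus_infl_val_prepend[OF m e Y']] m
    by (simp add: sig_plus_eq_glue)
qed

text \<open>Inflating (Z + C) * exp(B) at the first element w of B copies every earlier element, since
  all of them have value 1 with w; the copies of C, placed right after C, have value 0 to C and
  value 1 to B, so they form a second copy of C.\<close>

definition infl_dup :: "nat \<Rightarrow> nat \<Rightarrow> nat \<Rightarrow> nat + nat" where
  "infl_dup w c a = (if a < w then Inl a else if a < w + c then Inr (a - c) else Inl (a - c))"

lemma snd_sig_glue_exp_first: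
  "i < fst A \<Longrightarrow> 0 < fst B \<Longrightarrow> snd (sig_glue 1 A (sig_exp B)) i (fst A) = 1"
  by (simp add: snd_sig_glue)

lemma infl_embedding_dup:
  assumes "0 < fst B"
  shows "infl_embedding (sig_glue 1 (sig_glue 0 Z C) (sig_exp B)) (fst Z + fst C)
    (fst Z + fst C + fst C + fst B) (infl_dup (fst Z + fst C) (fst C))"
  using snd_sig_glue_exp_first[OF _ assms, of _ "sig_glue 0 Z C"]
  by (auto simp: infl_embedding_def infl_dup_def)

lemma sig_glue_infl_val_dup:
  assumes B: "0 < fst B"
  shows "sig_glue 1 (sig_glue 0 (sig_glue 0 Z C) C) (sig_exp B)
    = sig_norm (fst Z + fst C + fst C + fst B, \<lambda>a b.
        infl_val (sig_glue 1 (sig_glue 0 Z C) (sig_exp B)) (fst Z + fst C)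
          (infl_dup (fst Z + fst C) (fst C) a) (infl_dup (fst Z + fst C) (fst C) b))"
  unfolding sig_glue_def[of 1 "sig_glue 0 (sig_glue 0 Z C) C"]
proof (rule sig_norm_eqI)
  let ?T = "sig_glue 1 (sig_glue 0 Z C) (sig_exp B)" and ?w = "fst Z + fst C" and ?c = "fst C"
  let ?e = "infl_dup ?w ?c" and ?U = "sig_glue 0 (sig_glue 0 Z C) C"
  have to_top: "snd ?T i ?w = 1" if "i < ?w" for i
    using snd_sig_glue_exp_first[OF _ B, of i "sig_glue 0 Z C"] that by simp
  fix a b assume ab: "a < b" "b < fst ?U + fst (sig_exp B)"
  consider "b < ?w" | "?w \<le> a" "b < ?w + ?c" | "a < ?w" "?w \<le> b" "b < ?w + ?c"
    | "a < ?w" "?w + ?c \<le> b" | "?w \<le> a" "a < ?w + ?c" "?w + ?c \<le> b" | "?w + ?c \<le> a"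
    by linarith
  then show "(if b < fst ?U then snd ?U a b
      else if fst ?U \<le> a then snd (sig_exp B) (a - fst ?U) (b - fst ?U)
      else 1) = infl_val ?T ?w (?e a) (?e b)"
  proof cases
    case 1
    then show ?thesis using ab by (simp add: infl_dup_def snd_sig_glue)
  next
    case 2
    then show ?thesis using ab by (auto simp: infl_dup_def snd_sig_glue add.commute)
  next
    case 3
    then show ?thesis using ab to_top[of "b - ?c"] to_top[of a]
      by (simp add: infl_dup_def snd_sig_glue)
  next
    case 4
    then obtain d where "b = ?w + ?c + d"
      using le_iff_add by blast
    then show ?thesis using ab 4 by (simp add: infl_dup_def snd_sig_glue)
  next
    case 5
    then obtain d where d: "b = ?w + ?c + d"
      using le_iff_add by blast
    have "1 \<le> snd ?T ?w (b - ?c)" if "d \<noteq> 0"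
      using that ab d by (simp add: snd_sig_glue sig_exp_def snd_sig_norm)
    then show ?thesis using ab 5 d to_top[of "a - ?c"]
      by (cases "d = 0") (simp_all add: infl_dup_def min_absorb1)
  next
    case 6
    then have "?e a = Inl (a - ?c)" "?e b = Inl (b - ?c)"
      using ab by (simp_all add: infl_dup_def)
    moreover have "?w \<le> a - ?c" "?w \<le> b - ?c" "a - ?c < b - ?c"
      using 6 ab by linarith+
    moreover have "x - ?c - ?w = x - (?w + ?c)" for x
      by simp
    ultimately show ?thesis
      using 6 ab by (simp add: snd_sig_glue)
  qed
qed simp

lemma sig_step_dup:
  assumes B: "0 < fst B"
  shows "sig_step (sig_star_exp (sig_plus Z C) B) (sig_star_exp (sig_plus (sig_plus Z C) C) B)"
  using sig_stepI[OF infl_embedding_dup[OF B] sig_glue_infl_val_dup[OF B]] B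
  by (simp add: sig_star_exp_eq_glue sig_plus_eq_glue)

subsection \<open>The quasi-order\<close>

lemma sig_le_refl [simp]: "sig_le A A"
  by (simp add: sig_le_def)

lemma sig_le_trans [trans]: "sig_le A B \<Longrightarrow> sig_le B C \<Longrightarrow> sig_le A C"
  unfolding sig_le_def by (rule rtranclp_trans)

lemma sig_le_if_step: "sig_step B A \<Longrightarrow> sig_le A B"
  by (simp add: sig_le_def)

lemma sig_le_lift:
  assumes f_step: "\<And>X X'. sig_step X X' \<Longrightarrow> sig_step (f X) (f X')" and le: "sig_le A B"
  shows "sig_le (f A) (f B)"
  using le unfolding sig_le_def
proof (induction rule: rtranclp_induct)
  case (step Y Z)
  then show ?case
    using f_step by (simp add: rtranclp.rtrancl_into_rtrancl)
qed simp

lemma sig_le_glue_left: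
  assumes "c \<le> 1" "sig_le X' X"
  shows "sig_le (sig_glue c X' Y) (sig_glue c X Y)"
  using assms sig_le_lift[of "\<lambda>X. sig_glue c X Y"] sig_step_glue_left by blast

lemma sig_le_plus_left: "sig_le X' X \<Longrightarrow> sig_le (sig_plus X' Y) (sig_plus X Y)"
  by (simp add: sig_plus_eq_glue sig_le_glue_left)

lemma sig_le_plus_right: "sig_le Y' Y \<Longrightarrow> sig_le (sig_plus X Y') (sig_plus X Y)"
  by (rule sig_le_lift) (rule sig_step_plus_right)

lemma sig_le_star_exp_left: "sig_le X' X \<Longrightarrow> sig_le (sig_star_exp X' B) (sig_star_exp X B)"
  by (simp add: sig_star_exp_eq_glue sig_le_glue_left)

lemma sig_le_restr:
  assumes T: "0 < fst T" and g: "strict_mono_on {..<k} g" "g ` {..<k} \<subseteq> {..<fst T}"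
  shows "sig_le (restr T k g) T"
proof (rule sig_le_if_step, rule sig_stepI)
  show "infl_embedding T 0 k (\<lambda>a. Inl (g a))"
    using g by (auto simp: infl_embedding_def strict_mono_on_def)
qed (simp_all add: restr_def T)

lemma sig_le_glue_fst: "sig_le (sig_norm X) (sig_glue c X Y)"
proof (cases "fst X + fst Y = 0")
  case True
  then show ?thesis by (simp add: sig_norm_empty sig_glue_def)
next
  case False
  have "restr (sig_glue c X Y) (fst X) id = sig_norm (fst X, snd X)"
    unfolding restr_def by (rule sig_norm_eqI) (auto simp: snd_sig_glue)
  then show ?thesis
    using False sig_le_restr[of "sig_glue c X Y" "fst X" id] by (simp add: strict_mono_on_def)
qed

lemma sig_le_glue_snd: "sig_le (sig_norm Y) (sig_glue c X Y)"
proof (cases "fst X + fst Y = 0")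
  case True
  then show ?thesis by (simp add: sig_norm_empty sig_glue_def)
next
  case False
  have "restr (sig_glue c X Y) (fst Y) (\<lambda>a. a + fst X) = sig_norm (fst Y, snd Y)"
    unfolding restr_def by (rule sig_norm_eqI) (auto simp: snd_sig_glue)
  then show ?thesis
    using False sig_le_restr[of "sig_glue c X Y" "fst Y" "\<lambda>a. a + fst X"]
    by (auto simp: strict_mono_on_def image_subset_iff)
qed

subsection \<open>Sums and multiples\<close>

lemma sig_sum_Suc: "sig_sum A (Suc n) = sig_plus (sig_sum A n) (A n)"
  by (simp add: sig_sum_def)

lemma sig_sum_0 [simp]: "sig_sum A 0 = sig_zero"
  by (simp add: sig_sum_def)

lemma sig_norm_zero [simp]: "sig_norm sig_zero = sig_zero"
  by (simp add: sig_norm_empty sig_zero_def)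

lemma sig_norm_sig_sum [simp]: "sig_norm (sig_sum A n) = sig_sum A n"
  by (cases n) (simp_all add: sig_sum_Suc sig_plus_def)

lemma sig_glue_zero_left: "sig_glue c sig_zero Y = sig_norm Y"
  by (simp add: sig_glue_def sig_zero_def sig_norm_def)

lemma sig_star_exp_norm [simp]: "sig_star_exp (sig_norm X) B = sig_star_exp X B"
  unfolding sig_star_exp_def by (rule sig_norm_eqI) (auto simp: snd_sig_norm)

lemma sig_exp_plus: "sig_exp (sig_plus A B) = sig_star_exp (sig_exp A) B"
  unfolding sig_exp_def sig_star_exp_def
  by (rule sig_norm_eqI) (auto simp: sig_plus_def snd_sig_norm)

lemma sig_le_sig_sum_mono:
  "(\<And>i. i < n \<Longrightarrow> sig_le (A i) (A' i)) \<Longrightarrow> sig_le (sig_sum A n) (sig_sum A' n)"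
proof (induction n)
  case (Suc n)
  have "sig_le (sig_plus (sig_sum A n) (A n)) (sig_plus (sig_sum A n) (A' n))"
    using Suc.prems by (simp add: sig_le_plus_right)
  also have "sig_le \<dots> (sig_plus (sig_sum A' n) (A' n))"
    using Suc by (simp add: sig_le_plus_left)
  finally show ?case
    by (simp add: sig_sum_Suc)
qed simp

lemma sig_le_sig_sum_term: "j < n \<Longrightarrow> sig_le (sig_norm (A j)) (sig_sum A n)"
proof (induction n)
  case (Suc n)
  show ?case
  proof (cases "j = n")
    case True
    then show ?thesis by (simp add: sig_sum_Suc sig_plus_eq_glue sig_le_glue_snd)
  next
    case False
    with Suc have "sig_le (sig_norm (A j)) (sig_norm (sig_sum A n))"
      by simp
    also have "sig_le \<dots> (sig_sum A (Suc n))"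
      using sig_le_glue_fst[of "sig_sum A n" 0 "A n"] by (simp add: sig_sum_Suc sig_plus_eq_glue)
    finally show ?thesis .
  qed
qed simp

lemma sig_le_star_exp_times:
  assumes B: "0 < fst B"
  shows "sig_le (sig_star_exp (sig_times C n) B) (sig_star_exp C B)"
proof -
  have times_0: "sig_times C 0 = sig_zero"
    by (simp add: sig_times_def)
  have times_Suc: "sig_times C (Suc n) = sig_plus (sig_times C n) C" for n
    by (simp add: sig_times_def sig_sum_Suc)
  have Suc: "sig_le (sig_star_exp (sig_times C (Suc n)) B) (sig_star_exp C B)" for n
  proof (induction n)
    case 0
    then show ?case
      by (simp only: times_Suc times_0 sig_plus_eq_glue sig_glue_zero_left sig_star_exp_norm
          sig_le_refl)
  next
    case (Suc n)
    have "sig_le (sig_star_exp (sig_times C (Suc (Suc n))) B) (sig_star_exp (sig_times C (Suc n)) B)"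
      using sig_step_dup[OF B, of "sig_times C n" C] by (simp add: times_Suc sig_le_if_step)
    then show ?case
      using Suc.IH by (rule sig_le_trans)
  qed
  show ?thesis
  proof (cases n)
    case 0
    then show ?thesis
      using sig_le_glue_snd[of "sig_exp B" 1 C]
      by (simp add: times_0 sig_star_exp_eq_glue sig_glue_zero_left)
  qed (use Suc in simp)
qed

lemma sig_star_exp_sum_equiv:
  assumes B: "0 < fst B" and j: "j < n" and le: "\<And>i. i < n \<Longrightarrow> sig_le (A i) (A j)"
  shows "sig_equiv (sig_star_exp (sig_sum A n) B) (sig_star_exp (A j) B)"
proof -
  have "sig_le (sig_sum A n) (sig_times (A j) n)"
    unfolding sig_times_def by (rule sig_le_sig_sum_mono) (rule le)
  then have "sig_le (sig_star_exp (sig_sum A n) B) (sig_star_exp (sig_times (A j) n) B)"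
    by (rule sig_le_star_exp_left)
  also have "sig_le \<dots> (sig_star_exp (A j) B)"
    by (rule sig_le_star_exp_times[OF B])
  finally show ?thesis
    using sig_le_star_exp_left[OF sig_le_sig_sum_term[OF j, of A], where B = B]
    by (simp add: sig_equiv_def)
qed

lemma sig_times_exp_le_exp_plus_one:
  "sig_le (sig_times (sig_exp A) m) (sig_exp (sig_plus A sig_one))"
proof -
  have "sig_le (sig_times (sig_exp A) m) (sig_star_exp (sig_times (sig_exp A) m) sig_one)"
    using sig_le_glue_fst[of "sig_times (sig_exp A) m" 1 "sig_exp sig_one"]
    by (simp add: sig_star_exp_eq_glue sig_times_def)
  also have "sig_le \<dots> (sig_star_exp (sig_exp A) sig_one)"
    by (rule sig_le_star_exp_times) (simp add: sig_one_def)
  also have "\<dots> = sig_exp (sig_plus A sig_one)"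
    by (rule sig_exp_plus[symmetric])
  finally show ?thesis .
qed

lemma SigSet_fst_pos:
  assumes "B \<in> SigSet" "B \<noteq> sig_zero"
  shows "0 < fst B"
proof -
  obtain X where X: "B = sig_norm X"
    using assms(1) unfolding SigSet_def by (elim CollectE exE conjE) (erule that)
  show ?thesis
  proof (rule ccontr)
    assume "\<not> 0 < fst B"
    then have "B = sig_zero" using X sig_norm_empty[of X] by simp
    then show False using assms(2) by contradiction
  qed
qed

theorem lemma8p3:
  shows "(\<forall>(A :: nat \<Rightarrow> sig) (n :: nat) (B :: sig) (j :: nat).
            (\<forall>i<n. A i \<in> SigSet) \<and> B \<in> SigSet \<and> B \<noteq> sig_zero \<and> j < n
            \<and> (\<forall>i<n. sig_le (A i) (A j))
            \<longrightarrow> sig_equiv (sig_star_exp (sig_sum A n) B) (sig_star_exp (A j) B))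
       \<and> (\<forall>(A :: sig) (m :: nat). A \<in> SigSet \<longrightarrow>
            sig_le (sig_times (sig_exp A) m) (sig_exp (sig_plus A sig_one)))"
proof (intro conjI allI impI)
  fix A :: "nat \<Rightarrow> sig" and n B j
  assume h: "(\<forall>i<n. A i \<in> SigSet) \<and> B \<in> SigSet \<and> B \<noteq> sig_zero \<and> j < n
    \<and> (\<forall>i<n. sig_le (A i) (A j))"
  \<comment> \<open>Membership in SigSet is used only to get 0 < fst B.\<close>
  show "sig_equiv (sig_star_exp (sig_sum A n) B) (sig_star_exp (A j) B)"
  proof (rule sig_star_exp_sum_equiv)
    show "0 < fst B"
      using h by (intro SigSet_fst_pos) simp_all
  qed (use h in simp_all)
qed (rule sig_times_exp_le_exp_plus_one)

end
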